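(* Let $n$ be a positive integer and let $p$ be a prime number with $p>n^2/4+1$. Then there is no arithmetical structure $(r_1,\dots,r_n)$ on $K_n$ with $r_1=p$.
   Context: An arithmetical structure on the complete graph $K_n$ is an $n$-tuple $(r_1,r_2,\dots,r_n)$ of positive integers with $\gcd(r_1,\dots,r_n)=1$ such that $r_j$ divides $\sum_{i=1}^n r_i$ for every $j$. The entries are always listed so that $r_1\geq r_2\geq\dots\geq r_n$; thus $r_1$ is the largest value of the structure. *)

theory Defs
  imports Complex_Main "HOL-Computational_Algebra.Primes"
begin

definition arith_structure_Kn :: "nat \<Rightarrow> (nat \<Rightarrow> nat) \<Rightarrow> bool" where
  "arith_structure_Kn n r \<longleftrightarrow>
     (\<forall>i\<in>{1..n}. 0 < r i) \<and>
     (\<forall>i j. 1 \<le> i \<longrightarrow> i \<le> j \<longrightarrow> j \<le> n \<longrightarrow> r j \<le> r i) \<and>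
     Gcd (r ` {1..n}) = 1 \<and>
     (\<forall>j\<in>{1..n}. r j dvd (\<Sum>i=1..n. r i))"


end

theory Submission
  imports Defs
begin

text \<open>Let \<open>a\<close> be the number of entries equal to \<open>p\<close> and \<open>B\<close> the set of the others; \<open>B\<close> is
  nonempty because the gcd is 1. Since \<open>p\<close> divides the total sum, write it as \<open>q p\<close>. The
  entries of \<open>B\<close> are smaller than \<open>p\<close>, hence coprime to it, so they divide \<open>q\<close>, and they sum
  to \<open>(q - a) p\<close>. If \<open>q \<ge> a + 2\<close>, bounding each of them by \<open>q\<close> already gives
  \<open>p \<le> |B| + a |B| / 2\<close>. If \<open>q = a + 1\<close>, they are divisors of \<open>a + 1\<close> summing to the prime \<open>p\<close>:
  they cannot all equal \<open>a + 1\<close>, a single smaller one divides \<open>p\<close> and so is 1, and several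
  smaller ones are each at most \<open>(a + 1) / 2\<close>. In every case AM-GM yields \<open>4 p \<le> n\<^sup>2 + 4\<close>.\<close>

lemma four_mult_le_square_add: "4 * x * y \<le> (x + y)^2" for x y :: nat
proof -
  have "4 * int x * int y \<le> (int x + int y)^2"
    using zero_le_power2[of "int x - int y"] by (simp add: power2_eq_square algebra_simps)
  then show ?thesis by (metis of_nat_le_iff of_nat_add of_nat_mult of_nat_numeral of_nat_power)
qed

lemma proper_dvd_imp_twice_le:
  fixes d m :: nat
  assumes "d dvd m" and "d \<noteq> m" and "0 < m"
  shows "2 * d \<le> m"
proof -
  obtain q where m: "m = d * q" using assms(1) by blast
  with assms(2,3) have "q \<noteq> 0" and "q \<noteq> 1" by auto
  then have "2 \<le> q" by arith
  then show ?thesis using m by simp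
qed

lemma divisor_sum_bound_large_cofactor:
  fixes a b p q :: nat
  assumes sum: "a * p + s = q * p" and s: "s \<le> b * q" and q: "a + 2 \<le> q"
  shows "4 * p \<le> (a + b)^2 + 4"
proof -
  define t where "t = q - a"
  have "t * p \<le> b * a + b * t"
    using sum s q unfolding t_def by (simp add: algebra_simps diff_mult_distrib)
  then have "t * (p - b) \<le> a * b"
    by (simp add: diff_mult_distrib2 algebra_simps)
  moreover have "2 * (p - b) \<le> t * (p - b)"
    using q unfolding t_def by (intro mult_le_mono1) simp
  ultimately have "4 * p \<le> 4 * b + 2 * a * b"
    by linarith
  also have "\<dots> \<le> (a + b)^2 + 4"
    using four_mult_le_square_add[of b 2] by (simp add: power2_eq_square algebra_simps)
  finally show ?thesis .
qed

lemma double_le_mult_succ_imp_four_le_square: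
  fixes a c k p :: nat
  assumes p: "2 * p \<le> (2 * k + c) * (a + 1)" and "2 \<le> c"
  shows "4 * p \<le> (a + k + c)^2"
proof -
  have "16 * p \<le> 4 * (2 * (a + 1)) * (2 * k + c)"
    using p by (simp add: algebra_simps)
  also have "\<dots> \<le> (2 * (a + 1) + (2 * k + c))^2"
    by (rule four_mult_le_square_add)
  also have "\<dots> \<le> (2 * (a + k + c))^2"
    using \<open>2 \<le> c\<close> by (intro power_mono) auto
  also have "\<dots> = 4 * (a + k + c)^2"
    by (simp add: power2_eq_square algebra_simps)
  finally show ?thesis
    by simp
qed

lemma divisor_sum_bound_succ_cofactor:
  fixes a p :: nat and d :: "'a \<Rightarrow> nat"
  assumes "prime p" and "1 \<le> a" and "finite B"
    and d: "\<forall>j\<in>B. 0 < d j \<and> d j < p \<and> d j dvd a + 1" and sum: "sum d B = p"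
  shows "4 * p \<le> (a + card B)^2 + 4"
proof -
  define m where "m = a + 1"
  define K where "K = {j\<in>B. d j = m}"
  define C where "C = B - K"
  have fin: "finite K" "finite C" and disj: "B = K \<union> C" "K \<inter> C = {}"
    using \<open>finite B\<close> unfolding K_def C_def by auto
  have card_B: "card B = card K + card C"
    using fin disj card_Un_disjoint by metis
  have "sum d K = card K * m"
    unfolding K_def by simp
  then have p: "p = card K * m + sum d C"
    using sum fin disj by (simp add: sum.union_disjoint)
  have "\<forall>j\<in>C. 2 * d j \<le> m"
    using d proper_dvd_imp_twice_le unfolding C_def K_def m_def by auto
  then have C_sum: "2 * sum d C \<le> card C * m"
    using sum_bounded_above[of C "\<lambda>j. 2 * d j" m] by (simp add: sum_distrib_left)
  consider "C = {}" | j where "C = {j}" | "2 \<le> card C"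
  proof (cases "card C \<le> 1")
    case True
    with fin(2) show ?thesis
      using that by (metis card_0_eq card_1_singletonE le_Suc_eq le_zero_eq One_nat_def)
  qed (use that in simp)
  then show ?thesis
  proof cases
    case 1
    then have "p = card K * m" using p by simp
    with \<open>prime p\<close> have "card K = 1 \<or> m = 1"
      using prime_product by blast
    with \<open>1 \<le> a\<close> \<open>p = card K * m\<close> have "m = p" and "K \<noteq> {}"
      unfolding m_def by auto
    then show ?thesis using d unfolding K_def by auto
  next
    case (2 j)
    then have "j \<in> B" "p = card K * m + d j" using disj p by auto
    moreover from this have "d j dvd p"
      using d unfolding m_def by (metis dvd_add dvd_mult dvd_refl)
    ultimately have "p = card K * m + 1"
      using d \<open>prime p\<close> by (metis prime_nat_iff less_irrefl)
    moreover have "4 * (card K * m) \<le> (a + card B)^2"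
      using four_mult_le_square_add[of "card K" m] card_B 2 unfolding m_def by (simp add: add_ac)
    ultimately show ?thesis by simp
  next
    case 3
    have "2 * p \<le> (2 * card K + card C) * (a + 1)"
      using p C_sum unfolding m_def by (simp add: algebra_simps)
    then have "4 * p \<le> (a + card K + card C)^2"
      using 3 by (rule double_le_mult_succ_imp_four_le_square)
    then have "4 * p \<le> (a + card B)^2"
      unfolding card_B by (simp add: add.assoc)
    then show ?thesis by simp
  qed
qed

lemma divisor_sum_bound:
  fixes a p q :: nat and d :: "'a \<Rightarrow> nat"
  assumes "prime p" and "1 \<le> a" and "finite B" and "B \<noteq> {}"
    and d: "\<forall>j\<in>B. 0 < d j \<and> d j < p \<and> d j dvd q" and sum: "a * p + sum d B = q * p"
  shows "4 * p \<le> (a + card B)^2 + 4"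
proof -
  have "0 < sum d B"
    using d \<open>finite B\<close> \<open>B \<noteq> {}\<close> by (intro sum_pos) auto
  with sum have "a * p < q * p"
    by linarith
  then have "a < q"
    by (simp add: mult_less_cancel2)
  then consider "q = a + 1" | "a + 2 \<le> q"
    by linarith
  then show ?thesis
  proof cases
    case 1
    with sum have "sum d B = p"
      by simp
    with d 1 show ?thesis
      using divisor_sum_bound_succ_cofactor[OF \<open>prime p\<close> \<open>1 \<le> a\<close> \<open>finite B\<close>] by auto
  next
    case 2
    have "\<forall>j\<in>B. d j \<le> q"
      using d \<open>a < q\<close> by (auto intro: dvd_imp_le)
    then have "sum d B \<le> card B * q"
      using sum_bounded_above[of B d q] by simp
    then show ?thesis
      by (rule divisor_sum_bound_large_cofactor[OF sum _ 2])
  qed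
qed

lemma arith_structure_Kn_pos: "arith_structure_Kn n r \<Longrightarrow> i \<in> {1..n} \<Longrightarrow> 0 < r i"
  unfolding arith_structure_Kn_def by blast

lemma arith_structure_Kn_le_first: "arith_structure_Kn n r \<Longrightarrow> i \<in> {1..n} \<Longrightarrow> r i \<le> r 1"
  unfolding arith_structure_Kn_def by simp

lemma arith_structure_Kn_dvd_sum:
  "arith_structure_Kn n r \<Longrightarrow> j \<in> {1..n} \<Longrightarrow> r j dvd (\<Sum>i=1..n. r i)"
  unfolding arith_structure_Kn_def by blast

lemma arith_structure_Kn_Gcd: "arith_structure_Kn n r \<Longrightarrow> Gcd (r ` {1..n}) = 1"
  unfolding arith_structure_Kn_def by simp

lemma arith_structure_Kn_nonconstant:
  assumes "arith_structure_Kn n r" and "1 \<le> n" and "r 1 \<noteq> 1"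
  shows "\<exists>i\<in>{1..n}. r i \<noteq> r 1"
proof -
  have "r ` {1..n} \<noteq> {r 1}"
    using arith_structure_Kn_Gcd[OF assms(1)] assms(3) by auto
  moreover have "1 \<in> {1..n}"
    using assms(2) by simp
  ultimately show ?thesis
    by blast
qed

lemma arith_structure_Kn_dvd_cofactor:
  assumes r: "arith_structure_Kn n r" and "prime (r 1)" and "1 \<le> n"
    and j: "j \<in> {1..n}" and "r j < r 1"
  shows "r j dvd (\<Sum>i=1..n. r i) div r 1"
proof -
  let ?S = "\<Sum>i=1..n. r i"
  have "\<not> r 1 dvd r j"
    using arith_structure_Kn_pos[OF r j] \<open>r j < r 1\<close> by (auto dest: dvd_imp_le)
  with \<open>prime (r 1)\<close> have "coprime (r j) (r 1)"
    using prime_imp_coprime coprime_commute by blast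
  moreover have "r 1 dvd ?S" and "r j dvd ?S"
    using arith_structure_Kn_dvd_sum[OF r] j \<open>1 \<le> n\<close> by simp_all
  then have "r j dvd r 1 * (?S div r 1)"
    by simp
  ultimately show ?thesis
    by (simp add: coprime_dvd_mult_right_iff)
qed

lemma arith_structure_Kn_prime_first_split:
  assumes r: "arith_structure_Kn n r" and "prime (r 1)" and "0 < n"
  obtains a B q where "1 \<le> a" and "finite B" and "B \<noteq> {}"
    and "\<forall>j\<in>B. 0 < r j \<and> r j < r 1 \<and> r j dvd q" and "a * r 1 + sum r B = q * r 1"
    and "a + card B = n"
proof -
  define A where "A = {i\<in>{1..n}. r i = r 1}"
  define B where "B = {i\<in>{1..n}. r i \<noteq> r 1}"
  define q where "q = (\<Sum>i=1..n. r i) div r 1"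
  have "1 \<in> A"
    using \<open>0 < n\<close> unfolding A_def by simp
  have "r 1 \<noteq> 1"
    using \<open>prime (r 1)\<close> by auto
  then have "B \<noteq> {}"
    using arith_structure_Kn_nonconstant[OF r] \<open>0 < n\<close> unfolding B_def by auto
  have partition: "{1..n} = A \<union> B" "A \<inter> B = {}" and "finite A" "finite B"
    unfolding A_def B_def by auto
  then have "card A + card B = n"
    by (metis card_Un_disjoint card_atLeastAtMost diff_Suc_1)
  have "1 \<le> card A"
    using \<open>1 \<in> A\<close> \<open>finite A\<close> by (metis Suc_le_eq One_nat_def card_gt_0_iff empty_iff)
  have "r 1 dvd (\<Sum>i=1..n. r i)"
    using arith_structure_Kn_dvd_sum[OF r, of 1] \<open>0 < n\<close> by simp
  then have "q * r 1 = (\<Sum>i=1..n. r i)"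
    unfolding q_def by simp
  also have "\<dots> = sum r A + sum r B"
    using partition \<open>finite A\<close> \<open>finite B\<close> by (simp add: sum.union_disjoint)
  also have "sum r A = card A * r 1"
    unfolding A_def by simp
  finally have "card A * r 1 + sum r B = q * r 1"
    by simp
  moreover have "\<forall>j\<in>B. 0 < r j \<and> r j < r 1 \<and> r j dvd q"
  proof
    fix j
    assume "j \<in> B"
    then have j: "j \<in> {1..n}" and "r j < r 1"
      using arith_structure_Kn_le_first[OF r] unfolding B_def by (auto simp: le_neq_implies_less)
    then show "0 < r j \<and> r j < r 1 \<and> r j dvd q"
      using arith_structure_Kn_pos[OF r j] arith_structure_Kn_dvd_cofactor[OF r _ _ j] \<open>0 < n\<close> \<open>prime (r 1)\<close>
      unfolding q_def by simp
  qed
  ultimately show ?thesis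
    using that \<open>1 \<le> card A\<close> \<open>finite B\<close> \<open>B \<noteq> {}\<close> \<open>card A + card B = n\<close> by blast
qed

theorem theorem3p2:
  fixes n p :: nat
  assumes "0 < n" and "prime p" and "real p > (real n)^2 / 4 + 1"
  shows "\<not> (\<exists>r. arith_structure_Kn n r \<and> r 1 = p)"
proof
  assume "\<exists>r. arith_structure_Kn n r \<and> r 1 = p"
  then obtain r where r: "arith_structure_Kn n r" and "r 1 = p"
    by blast
  with \<open>prime p\<close> \<open>0 < n\<close> obtain a B q where "1 \<le> a" "finite B" "B \<noteq> {}"
    and "\<forall>j\<in>B. 0 < r j \<and> r j < p \<and> r j dvd q" "a * p + sum r B = q * p"
    and "a + card B = n"
    by (metis arith_structure_Kn_prime_first_split)
  then have "4 * p \<le> (a + card B)^2 + 4"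
    by (intro divisor_sum_bound[OF \<open>prime p\<close>])
  with \<open>a + card B = n\<close> have "4 * p \<le> n^2 + 4"
    by simp
  then have "real (4 * p) \<le> real (n^2 + 4)"
    by (simp only: of_nat_le_iff)
  with assms(3) show False
    by simp
qed

end
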